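(* Let $G_\sigma$ denote the exponential distribution with scale $\sigma>0$ (density $\sigma^{-1}e^{-x/\sigma}$ on $(0,\infty)$) and $G=G_1$. Let $\sigma_{\mathrm{test}}>0$ be a random variable, not almost surely constant, having a density with compact support in $(0,\infty)$, such that $\sigma_{\mathrm{test}}$ and $1/\sigma_{\mathrm{test}}$ have the same distribution. Then: (i) the Cramér divergence satisfies $d(G_\sigma,G)=\frac{1+\sigma}{2}-\frac{2\sigma}{1+\sigma}$, and under CRP loss there exists $\sigma^*>1$ with $\mathbb{E}\,\ell(G_{\sigma^*},G_{\sigma_{\mathrm{test}}})<\mathbb{E}\,\ell(G,G_{\sigma_{\mathrm{test}}})$; (ii) the squared $L^2$ divergence satisfies $d(G_\sigma,G)=\frac{(\sigma-1)^2}{2\sigma(\sigma+1)}$, and under quadratic loss there exists $\sigma^*<1$ with $\mathbb{E}\,\ell(G_{\sigma^*},G_{\sigma_{\mathrm{test}}})<\mathbb{E}\,\ell(G,G_{\sigma_{\mathrm{test}}})$.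
   Context: Expected loss $\ell(F,G)=\mathbb{E}\,\ell(F,Y)$, $Y\sim G$; induced divergence $d(F,G)=\ell(F,G)-\ell(G,G)$. $\mathbb{E}\,\ell(F,G_{\sigma_{\mathrm{test}}})$ is the expectation over $\sigma_{\mathrm{test}}$ of $\ell(F,G_{\sigma_{\mathrm{test}}})$. CRP loss: $\ell(F,y)=\int_{\mathbb{R}}(F(x)-\mathbb{I}\{y\le x\})^2dx$, inducing the Cramér divergence $d(F,G)=\int(F-G)^2$ (CDFs). Quadratic loss: $\ell(F,y)=-2f(y)+\int f^2$ ($f$ the density of $F$), inducing $d(F,G)=\int(f-g)^2$. *)

theory Defs
  imports "HOL-Probability.Probability"
begin

definition exp_pdf :: "real \<Rightarrow> real \<Rightarrow> real" where
  "exp_pdf \<sigma> x = (if x > 0 then exp (- x / \<sigma>) / \<sigma> else 0)"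

definition exp_cdf :: "real \<Rightarrow> real \<Rightarrow> real" where
  "exp_cdf \<sigma> x = (if x < 0 then 0 else 1 - exp (- x / \<sigma>))"

definition exp_dist :: "real \<Rightarrow> real measure" where
  "exp_dist \<sigma> = density lborel (\<lambda>x. ennreal (exp_pdf \<sigma> x))"

definition crp_loss :: "(real \<Rightarrow> real) \<Rightarrow> real \<Rightarrow> real" where
  "crp_loss F y = (LINT x|lborel. (F x - (if y \<le> x then 1 else 0))\<^sup>2)"

definition quad_loss :: "(real \<Rightarrow> real) \<Rightarrow> real \<Rightarrow> real" where
  "quad_loss f y = - 2 * f y + (LINT x|lborel. (f x)\<^sup>2)"

definition expected_loss :: "(real \<Rightarrow> real) \<Rightarrow> real measure \<Rightarrow> real" where
  "expected_loss L G = (LINT y|G. L y)"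

definition cramer_div :: "(real \<Rightarrow> real) \<Rightarrow> (real \<Rightarrow> real) \<Rightarrow> real" where
  "cramer_div F G = (LINT x|lborel. (F x - G x)\<^sup>2)"

definition l2_div :: "(real \<Rightarrow> real) \<Rightarrow> (real \<Rightarrow> real) \<Rightarrow> real" where
  "l2_div f g = (LINT x|lborel. (f x - g x)\<^sup>2)"

end

theory Submission
  imports Defs "HOL-Real_Asymp.Real_Asymp"
begin

text \<open>For exponential forecasts and observations every expected score is an explicit rational
  function of the two scales: against observations of scale \<open>s\<close>, the forecast \<open>G\<^sub>\<sigma>\<close> has
  expected CRP loss \<open>s - 3\<sigma>/2 + 2\<sigma>\<^sup>2/(\<sigma> + s)\<close> and expected quadratic loss
  \<open>1/(2\<sigma>) - 2/(\<sigma> + s)\<close>. Compared with \<open>\<sigma> = 1\<close>, both differences are \<open>\<sigma> - 1\<close> times a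
  factor controlled by the means of \<open>w(X)\<close> resp. \<open>w(1/X)\<close>, where \<open>w(x) = 2/(1 + x)\<^sup>2\<close>.
  Since \<open>X\<close> and \<open>1/X\<close> have the same law these means agree, and since
  \<open>w(x) + w(1/x) = 1 + ((1 - x)/(1 + x))\<^sup>2\<close>, a non-degenerate \<open>X\<close> makes the common mean
  \<open>c\<close> exceed \<open>1/2\<close>. Hence any \<open>\<sigma> \<in> (1, 2c)\<close> beats \<open>\<sigma> = 1\<close> under CRP loss and any
  \<open>\<sigma> \<in> (1/(2c), 1)\<close> beats it under quadratic loss.\<close>

section \<open>Exponential integrals on a half-line\<close>

lemma has_bochner_integral_Ioi_FTC:
  fixes F f :: "real \<Rightarrow> real"
  assumes deriv: "\<And>x. a < x \<Longrightarrow> DERIV F x :> f x"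
    and cont: "\<And>x. a < x \<Longrightarrow> isCont f x"
    and nonneg: "\<And>x. a < x \<Longrightarrow> 0 \<le> f x"
    and "isCont F a" and lim: "(F \<longlongrightarrow> B) at_top"
  shows "has_bochner_integral lborel (\<lambda>x. indicator {a<..} x * f x) (B - F a)"
proof -
  have "(F \<longlongrightarrow> F a) (at_right a)"
    using \<open>isCont F a\<close> by (metis at_le isCont_def subset_UNIV tendsto_mono)
  then have "((F \<circ> real_of_ereal) \<longlongrightarrow> F a) (at_right (ereal a))"
    by (simp add: ereal_tendsto_simps)
  moreover have "((F \<circ> real_of_ereal) \<longlongrightarrow> B) (at_left \<infinity>)"
    using lim by (simp add: ereal_tendsto_simps)
  ultimately have "set_integrable lborel (einterval (ereal a) \<infinity>) f"
      and "(LBINT x=ereal a..\<infinity>. f x) = B - F a"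
    using interval_integral_FTC_nonneg[of "ereal a" \<infinity> F f "F a" B] deriv cont nonneg by auto
  moreover have "einterval (ereal a) \<infinity> = {a<..}"
    by (auto simp: einterval_def)
  ultimately show ?thesis
    by (simp add: has_bochner_integral_iff set_integrable_def set_lebesgue_integral_def
        interval_lebesgue_integral_def)
qed

lemma has_bochner_integral_exp_Ioi:
  fixes c :: real
  assumes "0 < c"
  shows "has_bochner_integral lborel (\<lambda>x. indicator {a<..} x * exp (- c * x)) (exp (- c * a) / c)"
proof -
  have "((\<lambda>x. - exp (- c * x) / c) \<longlongrightarrow> 0) at_top"
    using assms by real_asymp
  then have "has_bochner_integral lborel (\<lambda>x. indicator {a<..} x * exp (- c * x)) (0 - - exp (- c * a) / c)"
    using assms by (intro has_bochner_integral_Ioi_FTC)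
      (auto intro!: derivative_eq_intros continuous_intros simp: field_simps)
  then show ?thesis by simp
qed

lemma has_bochner_integral_x_exp_Ioi:
  fixes c :: real
  assumes "0 < c"
  shows "has_bochner_integral lborel (\<lambda>x. indicator {0<..} x * (x * exp (- c * x))) (1 / c\<^sup>2)"
proof -
  have "((\<lambda>x. - (x / c + 1 / c\<^sup>2) * exp (- c * x)) \<longlongrightarrow> 0) at_top"
    using assms by real_asymp
  then have "has_bochner_integral lborel (\<lambda>x. indicator {0<..} x * (x * exp (- c * x)))
      (0 - - (0 / c + 1 / c\<^sup>2) * exp (- c * 0))"
    using assms by (intro has_bochner_integral_Ioi_FTC)
      (auto intro!: derivative_eq_intros continuous_intros simp: field_simps power2_eq_square)
  then show ?thesis by simp
qed

lemma exp_neg_divide_mult_exp_neg_divide: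
  fixes x p q :: real
  shows "exp (- x / p) * exp (- x / q) = exp (- (1 / p + 1 / q) * x)"
proof -
  have "- x / p + - x / q = - (1 / p + 1 / q) * x"
    by (simp add: divide_inverse ring_distribs)
  then show ?thesis
    by (metis exp_add)
qed

lemma has_bochner_integral_exp_diff_squared:
  fixes p q \<alpha> \<beta> :: real
  assumes "0 < p" "0 < q"
  shows "has_bochner_integral lborel
      (\<lambda>x. indicator {0<..} x * (\<alpha> * exp (- x / p) - \<beta> * exp (- x / q))\<^sup>2)
      (\<alpha>\<^sup>2 * p / 2 - 2 * \<alpha> * \<beta> * p * q / (p + q) + \<beta>\<^sup>2 * q / 2)"
proof -
  have "0 < 1 / p + 1 / p" "0 < 1 / p + 1 / q" "0 < 1 / q + 1 / q"
    using assms by (simp_all add: add_pos_pos)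
  then have "has_bochner_integral lborel
      (\<lambda>x. \<alpha>\<^sup>2 * (indicator {0<..} x * exp (- (1 / p + 1 / p) * x))
         - 2 * \<alpha> * \<beta> * (indicator {0<..} x * exp (- (1 / p + 1 / q) * x))
         + \<beta>\<^sup>2 * (indicator {0<..} x * exp (- (1 / q + 1 / q) * x)))
      (\<alpha>\<^sup>2 * (exp (- (1 / p + 1 / p) * 0) / (1 / p + 1 / p))
         - 2 * \<alpha> * \<beta> * (exp (- (1 / p + 1 / q) * 0) / (1 / p + 1 / q))
         + \<beta>\<^sup>2 * (exp (- (1 / q + 1 / q) * 0) / (1 / q + 1 / q)))"
    by (intro has_bochner_integral_add has_bochner_integral_diff has_bochner_integral_mult_right
        has_bochner_integral_exp_Ioi)
  moreover have "indicator {0<..} x * (\<alpha> * exp (- x / p) - \<beta> * exp (- x / q))\<^sup>2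
      = \<alpha>\<^sup>2 * (indicator {0<..} x * exp (- (1 / p + 1 / p) * x))
         - 2 * \<alpha> * \<beta> * (indicator {0<..} x * exp (- (1 / p + 1 / q) * x))
         + \<beta>\<^sup>2 * (indicator {0<..} x * exp (- (1 / q + 1 / q) * x))" for x
    unfolding exp_neg_divide_mult_exp_neg_divide[symmetric]
    by (simp add: power2_eq_square algebra_simps)
  moreover have "1 / (1 / p + 1 / q) = p * q / (p + q)"
    using assms by (simp add: field_simps)
  ultimately show ?thesis
    by (simp add: mult.assoc)
qed

section \<open>Divergences and expected scores of exponential forecasts\<close>

lemma exp_cdf_measurable [measurable]: "exp_cdf \<sigma> \<in> borel_measurable borel"
  unfolding exp_cdf_def by measurable

lemma exp_pdf_measurable [measurable]: "exp_pdf \<sigma> \<in> borel_measurable borel"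
  unfolding exp_pdf_def by measurable

lemma cramer_div_exp_cdf:
  assumes "0 < \<sigma>"
  shows "cramer_div (exp_cdf \<sigma>) (exp_cdf 1) = (1 + \<sigma>) / 2 - 2 * \<sigma> / (1 + \<sigma>)"
proof -
  have "(exp_cdf \<sigma> x - exp_cdf 1 x)\<^sup>2
      = indicator {0<..} x * (1 * exp (- x / 1) - 1 * exp (- x / \<sigma>))\<^sup>2" for x
    by (cases "x < 0") (auto simp: exp_cdf_def indicator_def)
  then have "has_bochner_integral lborel (\<lambda>x. (exp_cdf \<sigma> x - exp_cdf 1 x)\<^sup>2)
      (1 / 2 - 2 * \<sigma> / (1 + \<sigma>) + \<sigma> / 2)"
    using has_bochner_integral_exp_diff_squared[of 1 \<sigma> 1 1] assms by simp
  then show ?thesis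
    unfolding cramer_div_def by (simp add: has_bochner_integral_integral_eq add_divide_distrib)
qed

lemma l2_div_exp_pdf:
  assumes "0 < \<sigma>"
  shows "l2_div (exp_pdf \<sigma>) (exp_pdf 1) = (\<sigma> - 1)\<^sup>2 / (2 * \<sigma> * (\<sigma> + 1))"
proof -
  have "(exp_pdf \<sigma> x - exp_pdf 1 x)\<^sup>2
      = indicator {0<..} x * (1 / \<sigma> * exp (- x / \<sigma>) - 1 * exp (- x / 1))\<^sup>2" for x
    by (auto simp: exp_pdf_def indicator_def)
  then have "has_bochner_integral lborel (\<lambda>x. (exp_pdf \<sigma> x - exp_pdf 1 x)\<^sup>2)
      ((1 / \<sigma>)\<^sup>2 * \<sigma> / 2 - 2 * (1 / \<sigma>) * 1 * \<sigma> * 1 / (\<sigma> + 1) + 1\<^sup>2 * 1 / 2)"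
    using has_bochner_integral_exp_diff_squared[of \<sigma> 1 "1 / \<sigma>" 1] assms by simp
  moreover have "(1 / \<sigma>)\<^sup>2 * \<sigma> / 2 - 2 * (1 / \<sigma>) * 1 * \<sigma> * 1 / (\<sigma> + 1) + 1\<^sup>2 * 1 / 2
      = (\<sigma> - 1)\<^sup>2 / (2 * \<sigma> * (\<sigma> + 1))"
    using assms by (simp add: divide_simps) (simp add: algebra_simps power2_eq_square)
  ultimately show ?thesis
    unfolding l2_div_def by (simp add: has_bochner_integral_integral_eq)
qed

lemma integral_exp_pdf_squared:
  assumes "0 < \<sigma>"
  shows "(LINT x|lborel. (exp_pdf \<sigma> x)\<^sup>2) = 1 / (2 * \<sigma>)"
proof -
  have "(exp_pdf \<sigma> x)\<^sup>2 = indicator {0<..} x * (1 / \<sigma> * exp (- x / \<sigma>) - 0 * exp (- x / 1))\<^sup>2" for x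
    by (auto simp: exp_pdf_def indicator_def)
  then have "has_bochner_integral lborel (\<lambda>x. (exp_pdf \<sigma> x)\<^sup>2) ((1 / \<sigma>)\<^sup>2 * \<sigma> / 2)"
    using has_bochner_integral_exp_diff_squared[of \<sigma> 1 "1 / \<sigma>" 0] assms by simp
  then show ?thesis
    using assms by (simp add: has_bochner_integral_integral_eq power2_eq_square)
qed

lemma crp_loss_exp_cdf_pos:
  assumes "0 < \<sigma>" "0 < y"
  shows "crp_loss (exp_cdf \<sigma>) y = y - 3 * \<sigma> / 2 + 2 * \<sigma> * exp (- y / \<sigma>)"
proof -
  define G where "G x = indicator {0<..<y} x
      - 2 * (indicator {0<..} x * exp (- (1 / \<sigma>) * x))
      + 2 * (indicator {y<..} x * exp (- (1 / \<sigma>) * x))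
      + indicator {0<..} x * exp (- (1 / \<sigma> + 1 / \<sigma>) * x)" for x
  have [measurable]: "G \<in> borel_measurable borel"
    unfolding G_def by measurable
  have "has_bochner_integral lborel (indicator {0<..<y}) y"
    using has_bochner_integral_real_indicator[of "{0<..<y}" lborel] assms by simp
  then have "has_bochner_integral lborel G
      (y - 2 * (exp (- (1 / \<sigma>) * 0) / (1 / \<sigma>)) + 2 * (exp (- (1 / \<sigma>) * y) / (1 / \<sigma>))
        + exp (- (1 / \<sigma> + 1 / \<sigma>) * 0) / (1 / \<sigma> + 1 / \<sigma>))"
    unfolding G_def using assms
    by (intro has_bochner_integral_add has_bochner_integral_diff has_bochner_integral_mult_right
        has_bochner_integral_exp_Ioi) auto
  moreover have "AE x in lborel. (exp_cdf \<sigma> x - (if y \<le> x then 1 else 0))\<^sup>2 = G x"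
    using AE_lborel_singleton[of y]
  proof eventually_elim
    case (elim x)
    then show ?case
      unfolding G_def exp_neg_divide_mult_exp_neg_divide[symmetric] using assms
      by (auto simp: exp_cdf_def indicator_def power2_eq_square algebra_simps)
  qed
  ultimately have "has_bochner_integral lborel (\<lambda>x. (exp_cdf \<sigma> x - (if y \<le> x then 1 else 0))\<^sup>2)
      (y - 3 * \<sigma> / 2 + 2 * \<sigma> * exp (- y / \<sigma>))"
    using assms by (subst has_bochner_integral_cong_AE) (auto simp: algebra_simps)
  then show ?thesis
    unfolding crp_loss_def by (simp add: has_bochner_integral_integral_eq)
qed

lemma crp_loss_exp_cdf_nonpos:
  assumes "0 < \<sigma>" "y \<le> 0"
  shows "crp_loss (exp_cdf \<sigma>) y = \<sigma> / 2 - y"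
proof -
  have "has_bochner_integral lborel (indicator {y..0}) (- y)"
    using has_bochner_integral_real_indicator[of "{y..0}" lborel] assms by simp
  then have "has_bochner_integral lborel
      (\<lambda>x. indicator {y..0} x + indicator {0<..} x * exp (- (1 / \<sigma> + 1 / \<sigma>) * x))
      (- y + exp (- (1 / \<sigma> + 1 / \<sigma>) * 0) / (1 / \<sigma> + 1 / \<sigma>))"
    using assms by (intro has_bochner_integral_add has_bochner_integral_exp_Ioi) auto
  moreover have "(exp_cdf \<sigma> x - (if y \<le> x then 1 else 0))\<^sup>2
      = indicator {y..0} x + indicator {0<..} x * exp (- (1 / \<sigma> + 1 / \<sigma>) * x)" for x
    unfolding exp_neg_divide_mult_exp_neg_divide[symmetric] using assms
    by (auto simp: exp_cdf_def indicator_def power2_eq_square)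
  ultimately show ?thesis
    unfolding crp_loss_def using assms by (simp add: has_bochner_integral_integral_eq)
qed

lemma crp_loss_exp_cdf:
  assumes "0 < \<sigma>"
  shows "crp_loss (exp_cdf \<sigma>)
    = (\<lambda>y. if 0 < y then y - 3 * \<sigma> / 2 + 2 * \<sigma> * exp (- y / \<sigma>) else \<sigma> / 2 - y)"
  using crp_loss_exp_cdf_pos[OF assms] crp_loss_exp_cdf_nonpos[OF assms] by (auto simp: not_less)

lemma expected_loss_exp_dist:
  assumes "0 < s" "L \<in> borel_measurable borel"
  shows "expected_loss L (exp_dist s) = (LINT x|lborel. exp_pdf s x * L x)"
  unfolding expected_loss_def exp_dist_def
  using assms by (subst integral_density) (auto simp: exp_pdf_def)

text \<open>For \<open>s \<le> 0\<close> the function \<open>exp_pdf s\<close> is nonpositive, so \<open>exp_dist s\<close> is the zero measure.\<close>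

lemma expected_loss_exp_dist_nonpos:
  assumes "s \<le> 0"
  shows "expected_loss L (exp_dist s) = 0"
proof -
  have "\<not> 0 < exp_pdf s x" for x
    using assms by (auto simp: exp_pdf_def not_less divide_nonneg_nonpos)
  then have "AE x in exp_dist s. L x = 0"
    unfolding exp_dist_def by (subst AE_density) simp_all
  then show ?thesis
    unfolding expected_loss_def by (rule integral_eq_zero_AE)
qed

definition crp_risk :: "real \<Rightarrow> real \<Rightarrow> real" where
  "crp_risk \<sigma> s = s - 3 * \<sigma> / 2 + 2 * \<sigma>\<^sup>2 / (\<sigma> + s)"

definition quad_risk :: "real \<Rightarrow> real \<Rightarrow> real" where
  "quad_risk \<sigma> s = 1 / (2 * \<sigma>) - 2 / (\<sigma> + s)"

lemma crp_risk_measurable [measurable]: "crp_risk \<sigma> \<in> borel_measurable borel"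
  unfolding crp_risk_def by measurable

lemma quad_risk_measurable [measurable]: "quad_risk \<sigma> \<in> borel_measurable borel"
  unfolding quad_risk_def by measurable

lemma expected_crp_loss_exp_dist:
  assumes "0 < \<sigma>" "0 < s"
  shows "expected_loss (crp_loss (exp_cdf \<sigma>)) (exp_dist s) = crp_risk \<sigma> s"
proof -
  have sum_inverses: "1 / s + 1 / \<sigma> = (\<sigma> + s) / (s * \<sigma>)"
    using assms by (simp add: field_simps)
  have "0 < 1 / s" "0 < 1 / s + 1 / \<sigma>"
    using assms by (simp_all add: add_pos_pos)
  then have "has_bochner_integral lborel
      (\<lambda>x. 1 / s * (indicator {0<..} x * (x * exp (- (1 / s) * x)))
         - 3 * \<sigma> / (2 * s) * (indicator {0<..} x * exp (- (1 / s) * x))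
         + 2 * \<sigma> / s * (indicator {0<..} x * exp (- (1 / s + 1 / \<sigma>) * x)))
      (1 / s * (1 / (1 / s)\<^sup>2) - 3 * \<sigma> / (2 * s) * (exp (- (1 / s) * 0) / (1 / s))
         + 2 * \<sigma> / s * (exp (- (1 / s + 1 / \<sigma>) * 0) / (1 / s + 1 / \<sigma>)))"
    by (intro has_bochner_integral_add has_bochner_integral_diff has_bochner_integral_mult_right
        has_bochner_integral_exp_Ioi has_bochner_integral_x_exp_Ioi)
  moreover have "exp_pdf s x * crp_loss (exp_cdf \<sigma>) x
      = 1 / s * (indicator {0<..} x * (x * exp (- (1 / s) * x)))
         - 3 * \<sigma> / (2 * s) * (indicator {0<..} x * exp (- (1 / s) * x))
         + 2 * \<sigma> / s * (indicator {0<..} x * exp (- (1 / s + 1 / \<sigma>) * x))" for x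
    unfolding crp_loss_exp_cdf[OF assms(1)] exp_neg_divide_mult_exp_neg_divide[symmetric]
    by (auto simp: exp_pdf_def indicator_def algebra_simps)
  moreover have "1 / s * (1 / (1 / s)\<^sup>2) - 3 * \<sigma> / (2 * s) * (exp (- (1 / s) * 0) / (1 / s))
      + 2 * \<sigma> / s * (exp (- (1 / s + 1 / \<sigma>) * 0) / (1 / s + 1 / \<sigma>)) = crp_risk \<sigma> s"
    using assms unfolding sum_inverses by (simp add: crp_risk_def power2_eq_square)
  ultimately have "has_bochner_integral lborel (\<lambda>x. exp_pdf s x * crp_loss (exp_cdf \<sigma>) x) (crp_risk \<sigma> s)"
    by simp
  moreover have "crp_loss (exp_cdf \<sigma>) \<in> borel_measurable borel"
    unfolding crp_loss_exp_cdf[OF assms(1)] by measurable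
  ultimately show ?thesis
    using assms by (simp add: expected_loss_exp_dist has_bochner_integral_integral_eq)
qed

lemma expected_quad_loss_exp_dist:
  assumes "0 < \<sigma>" "0 < s"
  shows "expected_loss (quad_loss (exp_pdf \<sigma>)) (exp_dist s) = quad_risk \<sigma> s"
proof -
  have sum_inverses: "1 / s + 1 / \<sigma> = (\<sigma> + s) / (s * \<sigma>)"
    using assms by (simp add: field_simps)
  have "0 < 1 / s" "0 < 1 / s + 1 / \<sigma>"
    using assms by (simp_all add: add_pos_pos)
  then have "has_bochner_integral lborel
      (\<lambda>x. - 2 / (s * \<sigma>) * (indicator {0<..} x * exp (- (1 / s + 1 / \<sigma>) * x))
         + 1 / (2 * \<sigma> * s) * (indicator {0<..} x * exp (- (1 / s) * x)))
      (- 2 / (s * \<sigma>) * (exp (- (1 / s + 1 / \<sigma>) * 0) / (1 / s + 1 / \<sigma>))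
         + 1 / (2 * \<sigma> * s) * (exp (- (1 / s) * 0) / (1 / s)))"
    by (intro has_bochner_integral_add has_bochner_integral_mult_right has_bochner_integral_exp_Ioi)
  moreover have "exp_pdf s x * quad_loss (exp_pdf \<sigma>) x
      = - 2 / (s * \<sigma>) * (indicator {0<..} x * exp (- (1 / s + 1 / \<sigma>) * x))
         + 1 / (2 * \<sigma> * s) * (indicator {0<..} x * exp (- (1 / s) * x))" for x
    unfolding quad_loss_def integral_exp_pdf_squared[OF assms(1)]
      exp_neg_divide_mult_exp_neg_divide[symmetric]
    by (auto simp: exp_pdf_def indicator_def algebra_simps)
  moreover have "- 2 / (s * \<sigma>) * (exp (- (1 / s + 1 / \<sigma>) * 0) / (1 / s + 1 / \<sigma>))
      + 1 / (2 * \<sigma> * s) * (exp (- (1 / s) * 0) / (1 / s)) = quad_risk \<sigma> s"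
    using assms unfolding sum_inverses by (simp add: quad_risk_def)
  ultimately have "has_bochner_integral lborel (\<lambda>x. exp_pdf s x * quad_loss (exp_pdf \<sigma>) x) (quad_risk \<sigma> s)"
    by simp
  moreover have "quad_loss (exp_pdf \<sigma>) \<in> borel_measurable borel"
    unfolding quad_loss_def by measurable
  ultimately show ?thesis
    using assms by (simp add: expected_loss_exp_dist has_bochner_integral_integral_eq)
qed

definition scale_weight :: "real \<Rightarrow> real" where
  "scale_weight x = 2 / (1 + x)\<^sup>2"

lemma scale_weight_measurable [measurable]: "scale_weight \<in> borel_measurable borel"
  unfolding scale_weight_def by measurable

lemma scale_weight_add_scale_weight_inverse:
  assumes "0 < x"
  shows "scale_weight x + scale_weight (1 / x) = 1 + ((1 - x) / (1 + x))\<^sup>2"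
proof -
  have "(1 + x)\<^sup>2 \<noteq> 0"
    using assms by simp
  then show ?thesis
    using assms unfolding scale_weight_def
    by (simp add: power_divide divide_simps) (simp add: algebra_simps power2_eq_square)
qed

lemma crp_risk_diff_le:
  fixes s \<sigma> :: real
  assumes s: "0 < s" and \<sigma>: "1 \<le> \<sigma>"
  shows "crp_risk \<sigma> s - crp_risk 1 s \<le> (\<sigma> - 1) * (1 / 2 - scale_weight (1 / s) / \<sigma>)"
proof -
  have pos: "0 < 1 + s" "0 < \<sigma> + s" "0 < \<sigma>"
    using s \<sigma> by auto
  have diff: "crp_risk \<sigma> s - crp_risk 1 s = (\<sigma> - 1) * (1 / 2 - 2 * s\<^sup>2 / ((1 + s) * (\<sigma> + s)))"
    using pos unfolding crp_risk_def
    by (simp add: divide_simps) (simp add: algebra_simps power2_eq_square)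
  have weight: "scale_weight (1 / s) / \<sigma> = 2 * s\<^sup>2 / ((1 + s)\<^sup>2 * \<sigma>)"
    using s unfolding scale_weight_def by (simp add: field_simps)
  have "s \<le> \<sigma> * s" "s * s \<le> \<sigma> * (s * s)"
    using s \<sigma> mult_right_mono[of 1 \<sigma> "s * s"] by simp_all
  then have "(1 + s) * (\<sigma> + s) \<le> (1 + s)\<^sup>2 * \<sigma>"
    by (simp add: power2_eq_square algebra_simps)
  then have "2 * s\<^sup>2 / ((1 + s)\<^sup>2 * \<sigma>) \<le> 2 * s\<^sup>2 / ((1 + s) * (\<sigma> + s))"
    using pos by (intro frac_le) auto
  then show ?thesis
    unfolding diff weight using \<sigma> by (intro mult_left_mono) auto
qed

lemma quad_risk_diff_le:
  fixes s \<sigma> :: real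
  assumes s: "0 < s" and \<sigma>: "0 < \<sigma>" "\<sigma> \<le> 1"
  shows "quad_risk \<sigma> s - quad_risk 1 s \<le> (1 - \<sigma>) * (1 / (2 * \<sigma>) - scale_weight s)"
proof -
  have pos: "0 < 1 + s" "0 < \<sigma> + s"
    using s \<sigma> by auto
  have diff: "quad_risk \<sigma> s - quad_risk 1 s = (1 - \<sigma>) * (1 / (2 * \<sigma>) - 2 / ((1 + s) * (\<sigma> + s)))"
    using pos \<sigma> unfolding quad_risk_def
    by (simp add: divide_simps) (simp add: algebra_simps)
  have "(1 + s) * (\<sigma> + s) \<le> (1 + s)\<^sup>2"
    using pos \<sigma> by (simp add: power2_eq_square)
  then have "2 / (1 + s)\<^sup>2 \<le> 2 / ((1 + s) * (\<sigma> + s))"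
    using pos by (intro divide_left_mono) auto
  then show ?thesis
    unfolding diff scale_weight_def using \<sigma> by (intro mult_left_mono) auto
qed

section \<open>Random scales symmetric under inversion\<close>

lemma (in prob_space) AE_distributed_in_support:
  assumes "distributed M lborel X h" and [measurable]: "S \<in> sets borel"
    and "\<And>x. x \<notin> S \<Longrightarrow> h x = 0"
  shows "AE \<omega> in M. X \<omega> \<in> S"
proof -
  have "AE x in lborel. 0 < h x \<longrightarrow> x \<in> S"
    using assms(3) by (intro AE_I2) force
  then show ?thesis
    by (subst distributed_AE2[OF assms(1)]) simp_all
qed

lemma integral_comp_inverse_eq:
  fixes X :: "'a \<Rightarrow> real" and g :: "real \<Rightarrow> real"
  assumes [measurable]: "X \<in> borel_measurable M" "g \<in> borel_measurable borel"
    and "distr M lborel (\<lambda>\<omega>. 1 / X \<omega>) = distr M lborel X"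
  shows "(LINT \<omega>|M. g (1 / X \<omega>)) = (LINT \<omega>|M. g (X \<omega>))"
proof -
  have "(LINT \<omega>|M. g (1 / X \<omega>)) = (LINT y|distr M lborel (\<lambda>\<omega>. 1 / X \<omega>). g y)"
    by (simp add: integral_distr)
  also have "\<dots> = (LINT \<omega>|M. g (X \<omega>))"
    unfolding assms(3) by (simp add: integral_distr)
  finally show ?thesis .
qed

locale positive_bounded_rv = prob_space +
  fixes X :: "'a \<Rightarrow> real" and a b :: real
  assumes measurable_X [measurable]: "X \<in> borel_measurable M"
    and lower_bound_pos: "0 < a"
    and AE_X_in_bounds: "AE \<omega> in M. X \<omega> \<in> {a..b}"
begin

lemma AE_X_pos: "AE \<omega> in M. 0 < X \<omega>"
  using AE_X_in_bounds by eventually_elim (use lower_bound_pos in auto)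

lemma integrable_comp_X:
  fixes g :: "real \<Rightarrow> real"
  assumes [measurable]: "g \<in> borel_measurable borel" and "continuous_on {a..b} g"
  shows "integrable M (\<lambda>\<omega>. g (X \<omega>))"
proof -
  have "compact (g ` {a..b})"
    using assms(2) by (rule compact_continuous_image) simp
  then obtain B where B: "\<forall>y\<in>g ` {a..b}. norm y \<le> B"
    using compact_imp_bounded bounded_iff by metis
  have "AE \<omega> in M. norm (g (X \<omega>)) \<le> B"
    using AE_X_in_bounds by eventually_elim (use B in auto)
  moreover have "(\<lambda>\<omega>. g (X \<omega>)) \<in> borel_measurable M"
    by measurable
  ultimately show ?thesis
    by (rule integrable_const_bound)
qed

lemma integral_expected_loss_exp_dist:
  assumes [measurable]: "r \<in> borel_measurable borel"
    and "\<And>s. 0 < s \<Longrightarrow> expected_loss L (exp_dist s) = r s"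
  shows "(LINT \<omega>|M. expected_loss L (exp_dist (X \<omega>))) = (LINT \<omega>|M. r (X \<omega>))"
proof -
  \<comment> \<open>rewriting everywhere, with the junk value at \<open>s \<le> 0\<close>, yields a measurable integrand\<close>
  have "expected_loss L (exp_dist s) = (if 0 < s then r s else 0)" for s
    using assms(2) expected_loss_exp_dist_nonpos[of s L] by auto
  then have "(LINT \<omega>|M. expected_loss L (exp_dist (X \<omega>)))
      = (LINT \<omega>|M. (if 0 < X \<omega> then r (X \<omega>) else 0))"
    by simp
  also have "\<dots> = (LINT \<omega>|M. r (X \<omega>))"
    using AE_X_pos by (intro integral_cong_AE) auto
  finally show ?thesis .
qed

lemma integrable_crp_risk: "0 < \<sigma> \<Longrightarrow> integrable M (\<lambda>\<omega>. crp_risk \<sigma> (X \<omega>))"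
  using lower_bound_pos unfolding crp_risk_def
  by (intro integrable_comp_X) (auto intro!: continuous_intros)

lemma integrable_quad_risk: "0 < \<sigma> \<Longrightarrow> integrable M (\<lambda>\<omega>. quad_risk \<sigma> (X \<omega>))"
  using lower_bound_pos unfolding quad_risk_def
  by (intro integrable_comp_X) (auto intro!: continuous_intros)

lemma integrable_scale_weight: "integrable M (\<lambda>\<omega>. scale_weight (X \<omega>))"
  using lower_bound_pos unfolding scale_weight_def
  by (intro integrable_comp_X) (auto intro!: continuous_intros)

lemma integrable_scale_weight_inverse: "integrable M (\<lambda>\<omega>. scale_weight (1 / X \<omega>))"
proof -
  have "1 + 1 / x \<noteq> 0" if "a \<le> x" for x
  proof -
    have "0 < 1 + 1 / x"
      by (rule add_pos_pos) (use that lower_bound_pos in simp_all)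
    then show ?thesis
      by linarith
  qed
  then show ?thesis
    using lower_bound_pos unfolding scale_weight_def
    by (intro integrable_comp_X) (auto intro!: continuous_intros)
qed

lemma integral_scale_weight_gt_half:
  assumes "distr M lborel (\<lambda>\<omega>. 1 / X \<omega>) = distr M lborel X"
    and "\<not> (\<exists>c. AE \<omega> in M. X \<omega> = c)"
  shows "1 / 2 < (LINT \<omega>|M. scale_weight (X \<omega>))"
proof -
  define w where "w x = ((1 - x) / (1 + x))\<^sup>2" for x :: real
  have integrable_w: "integrable M (\<lambda>\<omega>. w (X \<omega>))"
    using lower_bound_pos unfolding w_def by (intro integrable_comp_X) (auto intro!: continuous_intros)
  have "\<not> (AE \<omega> in M. w (X \<omega>) = 0)"
  proof
    assume "AE \<omega> in M. w (X \<omega>) = 0"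
    then have "AE \<omega> in M. X \<omega> = 1"
      using AE_X_pos by eventually_elim (simp add: w_def)
    then show False
      using assms(2) by blast
  qed
  then have w_pos: "0 < (LINT \<omega>|M. w (X \<omega>))"
    using integrable_w
    by (simp add: integral_nonneg_eq_0_iff_AE integral_nonneg_AE order_less_le w_def)
  have "2 * (LINT \<omega>|M. scale_weight (X \<omega>))
      = (LINT \<omega>|M. scale_weight (X \<omega>)) + (LINT \<omega>|M. scale_weight (1 / X \<omega>))"
    using assms(1) by (simp add: integral_comp_inverse_eq)
  also have "\<dots> = (LINT \<omega>|M. scale_weight (X \<omega>) + scale_weight (1 / X \<omega>))"
    using integrable_scale_weight integrable_scale_weight_inverse by simp
  also have "\<dots> = (LINT \<omega>|M. 1 + w (X \<omega>))"
    using AE_X_pos unfolding w_def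
    by (intro integral_cong_AE) (auto simp: scale_weight_add_scale_weight_inverse)
  finally show ?thesis
    using w_pos integrable_w by (simp add: prob_space)
qed

lemma crp_improved_by_larger_scale:
  assumes "1 / 2 < (LINT \<omega>|M. scale_weight (1 / X \<omega>))"
  shows "\<exists>\<sigma>>1. (LINT \<omega>|M. expected_loss (crp_loss (exp_cdf \<sigma>)) (exp_dist (X \<omega>)))
      < (LINT \<omega>|M. expected_loss (crp_loss (exp_cdf 1)) (exp_dist (X \<omega>)))"
proof -
  define c where "c = (LINT \<omega>|M. scale_weight (1 / X \<omega>))"
  define \<sigma> where "\<sigma> = c + 1 / 2"
  have \<sigma>: "1 < \<sigma>" "1 / 2 < c / \<sigma>"
    using assms by (simp_all add: c_def \<sigma>_def field_simps)
  have expected_crp: "(LINT \<omega>|M. expected_loss (crp_loss (exp_cdf \<tau>)) (exp_dist (X \<omega>)))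
      = (LINT \<omega>|M. crp_risk \<tau> (X \<omega>))" if "0 < \<tau>" for \<tau>
    using that by (intro integral_expected_loss_exp_dist) (simp_all add: expected_crp_loss_exp_dist)
  have "(LINT \<omega>|M. crp_risk \<sigma> (X \<omega>)) - (LINT \<omega>|M. crp_risk 1 (X \<omega>))
      = (LINT \<omega>|M. crp_risk \<sigma> (X \<omega>) - crp_risk 1 (X \<omega>))"
    using integrable_crp_risk[of \<sigma>] integrable_crp_risk[of 1] \<sigma> by simp
  also have "\<dots> \<le> (LINT \<omega>|M. (\<sigma> - 1) * (1 / 2 - scale_weight (1 / X \<omega>) / \<sigma>))"
  proof (rule integral_mono_AE)
    show "integrable M (\<lambda>\<omega>. crp_risk \<sigma> (X \<omega>) - crp_risk 1 (X \<omega>))"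
      using integrable_crp_risk[of \<sigma>] integrable_crp_risk[of 1] \<sigma> by simp
    show "integrable M (\<lambda>\<omega>. (\<sigma> - 1) * (1 / 2 - scale_weight (1 / X \<omega>) / \<sigma>))"
      using integrable_scale_weight_inverse by simp
    show "AE \<omega> in M. crp_risk \<sigma> (X \<omega>) - crp_risk 1 (X \<omega>)
        \<le> (\<sigma> - 1) * (1 / 2 - scale_weight (1 / X \<omega>) / \<sigma>)"
      using AE_X_pos by eventually_elim (rule crp_risk_diff_le, use \<sigma> in auto)
  qed
  also have "\<dots> = (\<sigma> - 1) * (1 / 2 - c / \<sigma>)"
    using integrable_scale_weight_inverse by (simp add: c_def prob_space)
  also have "\<dots> < 0"
    using \<sigma> by (simp add: mult_pos_neg)
  finally show ?thesis
    using \<sigma> expected_crp[of \<sigma>] expected_crp[of 1] by (intro exI[of _ \<sigma>]) auto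
qed

lemma quad_improved_by_smaller_scale:
  assumes "1 / 2 < (LINT \<omega>|M. scale_weight (X \<omega>))"
  shows "\<exists>\<sigma>. 0 < \<sigma> \<and> \<sigma> < 1 \<and>
      (LINT \<omega>|M. expected_loss (quad_loss (exp_pdf \<sigma>)) (exp_dist (X \<omega>)))
      < (LINT \<omega>|M. expected_loss (quad_loss (exp_pdf 1)) (exp_dist (X \<omega>)))"
proof -
  define c where "c = (LINT \<omega>|M. scale_weight (X \<omega>))"
  define \<sigma> where "\<sigma> = (1 + 1 / (2 * c)) / 2"
  have \<sigma>: "0 < \<sigma>" "\<sigma> < 1" "1 / (2 * \<sigma>) < c"
    using assms by (simp_all add: c_def \<sigma>_def field_simps)
  have expected_quad: "(LINT \<omega>|M. expected_loss (quad_loss (exp_pdf \<tau>)) (exp_dist (X \<omega>)))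
      = (LINT \<omega>|M. quad_risk \<tau> (X \<omega>))" if "0 < \<tau>" for \<tau>
    using that by (intro integral_expected_loss_exp_dist) (simp_all add: expected_quad_loss_exp_dist)
  have "(LINT \<omega>|M. quad_risk \<sigma> (X \<omega>)) - (LINT \<omega>|M. quad_risk 1 (X \<omega>))
      = (LINT \<omega>|M. quad_risk \<sigma> (X \<omega>) - quad_risk 1 (X \<omega>))"
    using integrable_quad_risk[of \<sigma>] integrable_quad_risk[of 1] \<sigma> by simp
  also have "\<dots> \<le> (LINT \<omega>|M. (1 - \<sigma>) * (1 / (2 * \<sigma>) - scale_weight (X \<omega>)))"
  proof (rule integral_mono_AE)
    show "integrable M (\<lambda>\<omega>. quad_risk \<sigma> (X \<omega>) - quad_risk 1 (X \<omega>))"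
      using integrable_quad_risk[of \<sigma>] integrable_quad_risk[of 1] \<sigma> by simp
    show "integrable M (\<lambda>\<omega>. (1 - \<sigma>) * (1 / (2 * \<sigma>) - scale_weight (X \<omega>)))"
      using integrable_scale_weight by simp
    show "AE \<omega> in M. quad_risk \<sigma> (X \<omega>) - quad_risk 1 (X \<omega>)
        \<le> (1 - \<sigma>) * (1 / (2 * \<sigma>) - scale_weight (X \<omega>))"
      using AE_X_pos by eventually_elim (rule quad_risk_diff_le, use \<sigma> in auto)
  qed
  also have "\<dots> = (1 - \<sigma>) * (1 / (2 * \<sigma>) - c)"
    using integrable_scale_weight by (simp add: c_def prob_space)
  also have "\<dots> < 0"
    using \<sigma> by (simp add: mult_pos_neg)
  finally show ?thesis
    using \<sigma> expected_quad[of \<sigma>] expected_quad[of 1] by (intro exI[of _ \<sigma>]) auto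
qed

end

theorem mainTheorem9:
  fixes M :: "'a measure" and X :: "'a \<Rightarrow> real" and h :: "real \<Rightarrow> ennreal"
  assumes "prob_space M"
    and "distributed M lborel X h"
    and "\<exists>a b. 0 < a \<and> a \<le> b \<and> (\<forall>x. x \<notin> {a..b} \<longrightarrow> h x = 0)"
    and "\<not> (\<exists>c. AE \<omega> in M. X \<omega> = c)"
    and "distr M lborel (\<lambda>\<omega>. 1 / X \<omega>) = distr M lborel X"
  shows "(\<forall>\<sigma>>0. cramer_div (exp_cdf \<sigma>) (exp_cdf 1) = (1 + \<sigma>) / 2 - 2 * \<sigma> / (1 + \<sigma>))
       \<and> (\<exists>\<sigma>s>1. (LINT \<omega>|M. expected_loss (crp_loss (exp_cdf \<sigma>s)) (exp_dist (X \<omega>)))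
                 < (LINT \<omega>|M. expected_loss (crp_loss (exp_cdf 1)) (exp_dist (X \<omega>))))
       \<and> (\<forall>\<sigma>>0. l2_div (exp_pdf \<sigma>) (exp_pdf 1) = (\<sigma> - 1)\<^sup>2 / (2 * \<sigma> * (\<sigma> + 1)))
       \<and> (\<exists>\<sigma>s. 0 < \<sigma>s \<and> \<sigma>s < 1 \<and>
              (LINT \<omega>|M. expected_loss (quad_loss (exp_pdf \<sigma>s)) (exp_dist (X \<omega>)))
                 < (LINT \<omega>|M. expected_loss (quad_loss (exp_pdf 1)) (exp_dist (X \<omega>))))"
proof -
  interpret prob_space M by fact
  obtain a b where ab: "0 < a" "\<And>x. x \<notin> {a..b} \<Longrightarrow> h x = 0"
    using assms(3) by blast
  have "X \<in> borel_measurable M"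
    using distributed_measurable[OF assms(2)] by simp
  moreover have "AE \<omega> in M. X \<omega> \<in> {a..b}"
    using ab(2) by (intro AE_distributed_in_support[OF assms(2)]) auto
  ultimately interpret positive_bounded_rv M X a b
    using ab(1) by unfold_locales
  have "1 / 2 < (LINT \<omega>|M. scale_weight (X \<omega>))"
    using assms(5,4) by (rule integral_scale_weight_gt_half)
  moreover have "(LINT \<omega>|M. scale_weight (1 / X \<omega>)) = (LINT \<omega>|M. scale_weight (X \<omega>))"
    using assms(5) by (simp add: integral_comp_inverse_eq)
  ultimately show ?thesis
    using cramer_div_exp_cdf l2_div_exp_pdf crp_improved_by_larger_scale quad_improved_by_smaller_scale
    by simp
qed

end
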